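(* Let $E,F$ be Lebesgue-measurable subsets of $[-\infty,\infty]$, and let $m:F\to E$ be a surjective, measure-preserving, order-preserving (nondecreasing) map. Then there is a Lebesgue-null set $F_0\subseteq F$ such that $m$ restricted to $F\setminus F_0$ is a bijection onto $E$.
   Context: Lebesgue measure $\lambda$ on $[-\infty,\infty]$ gives $\{\pm\infty\}$ measure zero. A map $m:F\to E$ is measure-preserving if for every measurable $A\subseteq E$, $m^{-1}(A)$ is measurable with $\lambda(m^{-1}(A))=\lambda(A)$. *)

theory Defs
  imports "HOL-Analysis.Analysis"
begin

text \<open>Lebesgue measure on the extended real line [-infinity, infinity]:
  a set A of extended reals is measurable iff its finite part is Lebesgue
  measurable in the reals; its measure is the Lebesgue measure of the finite
  part (so the two points at infinity have measure zero).\<close>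

definition ereal_lmeasurable :: "ereal set \<Rightarrow> bool" where
  "ereal_lmeasurable A \<longleftrightarrow> {x::real. ereal x \<in> A} \<in> sets lebesgue"

definition ereal_lmeasure :: "ereal set \<Rightarrow> ennreal" where
  "ereal_lmeasure A = emeasure lebesgue {x::real. ereal x \<in> A}"

definition ereal_measure_preserving ::
  "(ereal \<Rightarrow> ereal) \<Rightarrow> ereal set \<Rightarrow> ereal set \<Rightarrow> bool" where
  "ereal_measure_preserving m F E \<longleftrightarrow>
     (\<forall>A. A \<subseteq> E \<and> ereal_lmeasurable A \<longrightarrow>
        ereal_lmeasurable {x\<in>F. m x \<in> A} \<and>
        ereal_lmeasure {x\<in>F. m x \<in> A} = ereal_lmeasure A)"

end

theory Submission
  imports Defs
begin

text \<open>It suffices to remove the points of F whose fibre contains a second point. By monotonicity,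
  the order intervals spanned by distinct such fibres are disjoint, so choosing a rational inside
  each one shows that there are only countably many nontrivial fibres. Each fibre is null, being the
  preimage of a point under a measure-preserving map, hence so is their countable union.\<close>

lemma countable_nontrivial_fibres:
  fixes m :: "'a::linorder \<Rightarrow> 'b::linorder" and D :: "'a set"
  assumes mono: "mono_on F m" and "countable D"
    and dense: "\<And>x y. x < y \<Longrightarrow> \<exists>d\<in>D. x < d \<and> d < y"
  shows "countable {e. \<exists>x\<in>F. \<exists>y\<in>F. x < y \<and> m x = e \<and> m y = e}"
    (is "countable ?S")
proof -
  have "\<forall>e\<in>?S. \<exists>d. d \<in> D \<and> (\<exists>x\<in>F. \<exists>y\<in>F. x < d \<and> d < y \<and> m x = e \<and> m y = e)"
    using dense by fast
  then obtain q where q: "\<forall>e\<in>?S.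
      q e \<in> D \<and> (\<exists>x\<in>F. \<exists>y\<in>F. x < q e \<and> q e < y \<and> m x = e \<and> m y = e)"
    by (rule bchoice[THEN exE])
  have "q e < q e'" if "e \<in> ?S" "e' \<in> ?S" "e < e'" for e e'
  proof -
    obtain y where y: "y \<in> F" "q e < y" "m y = e" using q \<open>e \<in> ?S\<close> by blast
    obtain x' where x': "x' \<in> F" "x' < q e'" "m x' = e'" using q \<open>e' \<in> ?S\<close> by blast
    have "y < x'"
    proof (rule ccontr)
      assume "\<not> y < x'"
      then have "m x' \<le> m y"
        using mono x'(1) y(1) by (simp add: monotone_onD)
      then show False using y(3) x'(3) \<open>e < e'\<close> by simp
    qed
    then show ?thesis using y(2) x'(2) by simp
  qed
  then have "strict_mono_on ?S q"
    by (intro monotone_onI)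
  then have "inj_on q ?S"
    by (rule strict_mono_on_imp_inj_on)
  moreover have "countable (q ` ?S)"
    using q \<open>countable D\<close> by (blast intro: countable_subset)
  ultimately show ?thesis
    by (rule countable_image_inj_on[rotated])
qed

lemma ereal_rat_dense:
  fixes x y :: ereal
  assumes "x < y"
  shows "\<exists>d\<in>ereal ` \<rat>. x < d \<and> d < y"
proof -
  obtain a b where "x < ereal a" "ereal a < ereal b" "ereal b < y"
    using assms by (metis ereal_dense2)
  moreover obtain r where "r \<in> \<rat>" "a < r" "r < b"
    using Rats_dense_in_real \<open>ereal a < ereal b\<close> by auto
  ultimately show ?thesis
    by (metis image_eqI less_ereal.simps(1) order.strict_trans)
qed

lemma bij_betw_remove_nontrivial_fibres:
  assumes "m ` F = E"
  shows "\<exists>F0 \<subseteq> {x\<in>F. \<exists>y\<in>F. y \<noteq> x \<and> m y = m x}. bij_betw m (F - F0) E"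
proof -
  have "\<forall>e\<in>E. \<exists>x. x \<in> F \<and> m x = e"
    using assms by blast
  then obtain c where c: "\<forall>e\<in>E. c e \<in> F \<and> m (c e) = e"
    by (rule bchoice[THEN exE])
  define F0 where "F0 = {x\<in>F. x \<noteq> c (m x)}"
  have "F0 \<subseteq> {x\<in>F. \<exists>y\<in>F. y \<noteq> x \<and> m y = m x}"
  proof
    fix x assume "x \<in> F0"
    then have "x \<in> F" "c (m x) \<noteq> x" unfolding F0_def by auto
    moreover from \<open>x \<in> F\<close> have "c (m x) \<in> F" "m (c (m x)) = m x"
      using c assms by auto
    ultimately show "x \<in> {x\<in>F. \<exists>y\<in>F. y \<noteq> x \<and> m y = m x}" by blast
  qed
  moreover have "inj_on m (F - F0)"
    unfolding F0_def by (rule inj_onI) auto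
  moreover have "m ` (F - F0) = E"
  proof
    show "E \<subseteq> m ` (F - F0)"
    proof
      fix e assume "e \<in> E"
      then have "c e \<in> F - F0" "m (c e) = e"
        using c unfolding F0_def by auto
      then show "e \<in> m ` (F - F0)" by (metis image_eqI)
    qed
  qed (use assms in blast)
  ultimately show ?thesis
    unfolding bij_betw_def by blast
qed

lemma ereal_singleton_null: "{x::real. ereal x \<in> {e}} \<in> null_sets lebesgue"
proof (cases e)
  case (real r)
  then have "{x::real. ereal x \<in> {e}} = {r}" by auto
  moreover have "{r} \<in> null_sets lborel" by (simp add: null_sets_def)
  ultimately show ?thesis using null_sets_completionI by metis
qed auto

lemma measure_preserving_fibre_null:
  assumes "ereal_measure_preserving m F E" and "e \<in> E"
  shows "{x::real. ereal x \<in> {y\<in>F. m y = e}} \<in> null_sets lebesgue"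
proof -
  have "ereal_lmeasurable {e}" "ereal_lmeasure {e} = 0"
    using ereal_singleton_null[of e]
    unfolding ereal_lmeasurable_def ereal_lmeasure_def by auto
  then have "ereal_lmeasurable {y\<in>F. m y \<in> {e}}" "ereal_lmeasure {y\<in>F. m y \<in> {e}} = 0"
    using assms unfolding ereal_measure_preserving_def by auto
  then show ?thesis
    unfolding ereal_lmeasurable_def ereal_lmeasure_def by auto
qed

lemma measure_preserving_mono_nontrivial_fibres_null:
  fixes m :: "ereal \<Rightarrow> ereal"
  assumes "ereal_measure_preserving m F E" and "m ` F = E" and "mono_on F m"
  shows "{x::real. ereal x \<in> {x\<in>F. \<exists>y\<in>F. y \<noteq> x \<and> m y = m x}} \<in> null_sets lebesgue"
proof -
  define S where "S = {e. \<exists>x\<in>F. \<exists>y\<in>F. x < y \<and> m x = e \<and> m y = e}"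
  have "countable S"
    unfolding S_def using \<open>mono_on F m\<close>
    by (rule countable_nontrivial_fibres[OF _ countable_image[OF countable_rat] ereal_rat_dense])
  then have null: "(\<Union>e\<in>S. {x::real. ereal x \<in> {y\<in>F. m y = e}}) \<in> null_sets lebesgue"
  proof (rule null_sets_UN')
    fix e assume "e \<in> S"
    then have "e \<in> E"
      using assms(2) unfolding S_def by blast
    then show "{x::real. ereal x \<in> {y\<in>F. m y = e}} \<in> null_sets lebesgue"
      by (rule measure_preserving_fibre_null[OF assms(1)])
  qed
  have "{x::real. ereal x \<in> {x\<in>F. \<exists>y\<in>F. y \<noteq> x \<and> m y = m x}}
      \<subseteq> (\<Union>e\<in>S. {x::real. ereal x \<in> {y\<in>F. m y = e}})"
  proof
    fix r assume "r \<in> {x::real. ereal x \<in> {x\<in>F. \<exists>y\<in>F. y \<noteq> x \<and> m y = m x}}"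
    then obtain y where y: "ereal r \<in> F" "y \<in> F" "y \<noteq> ereal r" "m y = m (ereal r)"
      by blast
    from \<open>y \<noteq> ereal r\<close> consider "y < ereal r" | "ereal r < y"
      by (rule neqE)
    then have "m (ereal r) \<in> S"
      unfolding S_def using y by cases blast+
    then show "r \<in> (\<Union>e\<in>S. {x::real. ereal x \<in> {y\<in>F. m y = e}})"
      using y(1) by blast
  qed
  with null show ?thesis
    using completion.complete2 by blast
qed

theorem mainTheorem13:
  fixes E F :: "ereal set" and m :: "ereal \<Rightarrow> ereal"
  assumes "ereal_lmeasurable E" and "ereal_lmeasurable F"
    and "m ` F = E"
    and "ereal_measure_preserving m F E"
    and "\<forall>x\<in>F. \<forall>y\<in>F. x \<le> y \<longrightarrow> m x \<le> m y"
  shows "\<exists>F0. F0 \<subseteq> F \<and> ereal_lmeasurable F0 \<and> ereal_lmeasure F0 = 0 \<and>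
           bij_betw m (F - F0) E"
proof -
  have "mono_on F m"
    using assms(5) by (intro monotone_onI) blast
  then have null: "{x::real. ereal x \<in> {x\<in>F. \<exists>y\<in>F. y \<noteq> x \<and> m y = m x}} \<in> null_sets lebesgue"
    using assms(3,4) by (intro measure_preserving_mono_nontrivial_fibres_null)
  obtain F0 where F0: "F0 \<subseteq> {x\<in>F. \<exists>y\<in>F. y \<noteq> x \<and> m y = m x}" "bij_betw m (F - F0) E"
    using bij_betw_remove_nontrivial_fibres[OF assms(3)] by blast
  then have "{x::real. ereal x \<in> F0} \<subseteq> {x::real. ereal x \<in> {x\<in>F. \<exists>y\<in>F. y \<noteq> x \<and> m y = m x}}"
    by blast
  with null have "{x::real. ereal x \<in> F0} \<in> null_sets lebesgue"
    using completion.complete2 by blast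
  moreover have "F0 \<subseteq> F"
    using F0(1) by blast
  ultimately show ?thesis
    using F0(2) unfolding ereal_lmeasurable_def ereal_lmeasure_def
    by (meson null_setsD1 null_setsD2)
qed

end
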